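(* Under the hypotheses of Proposition 5.1, let $(\bar u,\bar v)$ be the branch of stationary solutions given there. Then for $\alpha>\alpha_0$ with $\alpha-\alpha_0$ small enough: in case (PBC), $\bar u>0$ and $\bar v>0$ on $[0,1]$; in case (DBC), $\bar u>0$ on $(0,1]$ and $\bar v>0$ on $[0,1)$.
   Context: System (S): $\partial_t u+\partial_x(c(x)u)=\frac{\alpha v}{1+u+v}-u$, $\partial_t v-\partial_x(c(x)v)=\frac{\alpha u}{1+u+v}-v$ on $[0,1]$, $c\in\mathcal C([0,1])$ with $0<\underline c\le c\le\overline c$. Boundary conditions (DBC) $u(0)=0,v(1)=0$ or (PBC) $u(0)=u(1),v(0)=v(1)$. Proposition 5.1: with $\alpha_0=1$ for (PBC) and $\alpha_0=1/|\cos b_0|$ for (DBC), where $b_0\in(\pi/2,\pi)$ is the smallest positive root of $Cb+\tan b=0$, $\frac1C=\int_0^1dx/c$, there is $\alpha_1>\alpha_0$ and a smooth branch $\alpha\mapsto(\bar u,\bar v)\in\mathcal C([0,1])^2$, $\alpha\in[\alpha_0,\alpha_1)$, of stationary solutions with $(\bar u,\bar v)(\alpha_0)=0$ and $\alpha$-derivative at $\alpha_0$ equal to $\frac{\kappa_1C}{\kappa_2c(x)}(\tilde U,\tilde V)(C\int_0^xdy/c)$ where $\kappa_1,\kappa_2>0$, $(\tilde U,\tilde V)=(1,1)$ for (PBC) and $(\tilde U,\tilde V)(X)=(\sin(b_0X),\sin(b_0(1-X)))$ for (DBC). *)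

theory Defs
  imports "HOL-Analysis.Analysis"
begin

definition bc_holds :: "bool \<Rightarrow> (real \<Rightarrow> real) \<Rightarrow> (real \<Rightarrow> real) \<Rightarrow> bool" where
  "bc_holds dbc u v \<longleftrightarrow>
     (if dbc then u 0 = 0 \<and> v 1 = 0 else u 0 = u 1 \<and> v 0 = v 1)"

definition stationary_sol ::
  "(real \<Rightarrow> real) \<Rightarrow> bool \<Rightarrow> real \<Rightarrow> (real \<Rightarrow> real) \<Rightarrow> (real \<Rightarrow> real) \<Rightarrow> bool" where
  "stationary_sol c dbc \<alpha> u v \<longleftrightarrow>
     continuous_on {0..1} u \<and> continuous_on {0..1} v \<and>
     (\<forall>x\<in>{0..1}.
        ((\<lambda>y. c y * u y) has_real_derivative
            (\<alpha> * v x / (1 + u x + v x) - u x)) (at x within {0..1}) \<and>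
        ((\<lambda>y. c y * v y) has_real_derivative
            (-(\<alpha> * u x / (1 + u x + v x) - v x))) (at x within {0..1})) \<and>
     bc_holds dbc u v"

text \<open>Derivative of a family \<open>\<beta> \<mapsto> U \<beta>\<close> in C([0,1]) (sup norm on [0,1]) at \<open>a\<close>,
  relative to the parameter set \<open>S\<close>.\<close>

definition unif_has_deriv ::
  "(real \<Rightarrow> real \<Rightarrow> real) \<Rightarrow> (real \<Rightarrow> real) \<Rightarrow> real \<Rightarrow> real set \<Rightarrow> bool" where
  "unif_has_deriv U dU a S \<longleftrightarrow>
     continuous_on {0..1} dU \<and>
     (\<forall>\<epsilon>>0. \<exists>\<delta>>0. \<forall>\<beta>\<in>S. \<bar>\<beta> - a\<bar> < \<delta> \<longrightarrow>
        (\<forall>x\<in>{0..1}. \<bar>U \<beta> x - U a x - (\<beta> - a) * dU x\<bar> \<le> \<epsilon> * \<bar>\<beta> - a\<bar>))"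

definition Cc :: "(real \<Rightarrow> real) \<Rightarrow> real" where
  "Cc c = 1 / integral {0..1} (\<lambda>x. 1 / c x)"

definition Xc :: "(real \<Rightarrow> real) \<Rightarrow> real \<Rightarrow> real" where
  "Xc c x = Cc c * integral {0..x} (\<lambda>y. 1 / c y)"

definition is_b0 :: "real \<Rightarrow> real \<Rightarrow> bool" where
  "is_b0 C b0 \<longleftrightarrow> 0 < b0 \<and> cos b0 \<noteq> 0 \<and> C * b0 + tan b0 = 0 \<and>
     (\<forall>b. 0 < b \<and> b < b0 \<and> cos b \<noteq> 0 \<longrightarrow> C * b + tan b \<noteq> 0)"

definition alpha0 :: "bool \<Rightarrow> real \<Rightarrow> real" where
  "alpha0 dbc b0 = (if dbc then 1 / \<bar>cos b0\<bar> else 1)"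

definition profile :: "bool \<Rightarrow> real \<Rightarrow> real \<Rightarrow> real \<times> real" where
  "profile dbc b0 X = (if dbc then (sin (b0 * X), sin (b0 * (1 - X))) else (1, 1))"

end

theory Submission
  imports Defs
begin

text \<open>Near \<open>\<alpha>\<^sub>0\<close> the branch equals \<open>(\<alpha> - \<alpha>\<^sub>0)\<close> times its \<open>\<alpha>\<close>-derivative up to an error
  that is \<open>o(\<alpha> - \<alpha>\<^sub>0)\<close> uniformly in \<open>x\<close>, so it is positive wherever that derivative profile is
  bounded away from zero: everywhere for (PBC), and for (DBC), using \<open>0 < b\<^sub>0 < \<pi>\<close>, for \<open>u\<close> on
  \<open>[1/2, 1]\<close> and for \<open>v\<close> on \<open>[0, 1/2]\<close>. On the remaining halves the profile vanishes at the
  Dirichlet endpoint and positivity comes from the equation: \<open>c u\<close> vanishes at \<open>0\<close>, and at a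
  point where \<open>u \<le> 0 < v\<close> and the solution is small, \<open>(c u)' = \<alpha> v / (1 + u + v) - u > 0\<close>,
  so \<open>c u\<close> cannot attain a nonpositive minimum in \<open>(0, 1/2]\<close>; symmetrically for \<open>v\<close> near \<open>1\<close>.\<close>

lemma unif_has_deriv_imp_eventually_pos:
  fixes U :: "real \<Rightarrow> real \<Rightarrow> real"
  assumes deriv: "unif_has_deriv U dU a S" and zero: "\<forall>x\<in>{0..1}. U a x = 0"
    and K: "compact K" "K \<subseteq> {0..1}" and pos: "\<forall>x\<in>K. dU x > 0"
  shows "eventually (\<lambda>\<beta>. \<beta> \<in> S \<longrightarrow> (\<forall>x\<in>K. U \<beta> x > 0)) (at_right a)"
proof (cases "K = {}")
  case True
  then show ?thesis by simp
next
  case False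
  have "continuous_on K dU"
    using deriv K(2) continuous_on_subset unfolding unif_has_deriv_def by blast
  then obtain x0 where "x0 \<in> K" and min: "\<forall>y\<in>K. dU x0 \<le> dU y"
    using continuous_attains_inf[OF K(1) False] by blast
  define m where "m = dU x0"
  have "m > 0" using pos \<open>x0 \<in> K\<close> m_def by auto
  then obtain \<delta> where "\<delta> > 0" and approx: "\<forall>\<beta>\<in>S. \<bar>\<beta> - a\<bar> < \<delta> \<longrightarrow>
        (\<forall>x\<in>{0..1}. \<bar>U \<beta> x - U a x - (\<beta> - a) * dU x\<bar> \<le> m/2 * \<bar>\<beta> - a\<bar>)"
    using deriv unfolding unif_has_deriv_def by (meson half_gt_zero)
  have "U \<beta> x > 0" if "\<beta> \<in> S" "a < \<beta>" "\<beta> < a + \<delta>" "x \<in> K" for \<beta> x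
  proof -
    have "\<bar>U \<beta> x - (\<beta> - a) * dU x\<bar> \<le> m / 2 * (\<beta> - a)"
      using approx[rule_format, of \<beta> x] that K(2) zero by (auto simp: subset_iff)
    moreover have "(\<beta> - a) * m \<le> (\<beta> - a) * dU x"
      using min that m_def by (intro mult_left_mono) auto
    moreover have "0 < (\<beta> - a) * m" using that \<open>m > 0\<close> by simp
    moreover have "m / 2 * (\<beta> - a) = (\<beta> - a) * m / 2" by simp
    ultimately show ?thesis by (simp only: abs_le_iff) linarith
  qed
  then show ?thesis
    unfolding eventually_at_right_field using \<open>\<delta> > 0\<close> by (intro exI[of _ "a + \<delta>"]) auto
qed

lemma unif_has_deriv_imp_eventually_small:
  fixes U :: "real \<Rightarrow> real \<Rightarrow> real"
  assumes deriv: "unif_has_deriv U dU a S" and zero: "\<forall>x\<in>{0..1}. U a x = 0" and "\<epsilon> > 0"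
  shows "eventually (\<lambda>\<beta>. \<beta> \<in> S \<longrightarrow> (\<forall>x\<in>{0..1}. \<bar>U \<beta> x\<bar> < \<epsilon>)) (at a)"
proof -
  have "continuous_on {0..1} dU" using deriv unfolding unif_has_deriv_def by blast
  then have "bounded (dU ` {0..1})" by (intro compact_imp_bounded compact_continuous_image) auto
  then obtain B where "B > 0" and bound: "\<forall>x\<in>{0..1}. \<bar>dU x\<bar> \<le> B"
    unfolding bounded_pos by auto
  obtain \<delta> where "\<delta> > 0" and approx: "\<forall>\<beta>\<in>S. \<bar>\<beta> - a\<bar> < \<delta> \<longrightarrow>
        (\<forall>x\<in>{0..1}. \<bar>U \<beta> x - U a x - (\<beta> - a) * dU x\<bar> \<le> 1 * \<bar>\<beta> - a\<bar>)"
    using deriv unfolding unif_has_deriv_def by (meson zero_less_one)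
  have "\<bar>U \<beta> x\<bar> < \<epsilon>"
    if "\<beta> \<in> S" "\<bar>\<beta> - a\<bar> < min \<delta> (\<epsilon> / (B + 1))" "x \<in> {0..1}" for \<beta> x
  proof -
    have "\<bar>U \<beta> x - (\<beta> - a) * dU x\<bar> \<le> \<bar>\<beta> - a\<bar>"
      using approx that zero by auto
    moreover have "\<bar>(\<beta> - a) * dU x\<bar> \<le> \<bar>\<beta> - a\<bar> * B"
      unfolding abs_mult using bound that by (intro mult_left_mono) auto
    ultimately have "\<bar>U \<beta> x\<bar> \<le> \<bar>\<beta> - a\<bar> * (B + 1)" by (auto simp: algebra_simps)
    also have "\<dots> < \<epsilon>"
      using that \<open>B > 0\<close> by (simp add: less_divide_eq)
    finally show ?thesis .
  qed
  then show ?thesis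
    unfolding eventually_at using \<open>\<delta> > 0\<close> \<open>\<epsilon> > 0\<close> \<open>B > 0\<close>
    by (intro exI[of _ "min \<delta> (\<epsilon> / (B + 1))"]) (auto simp: dist_real_def)
qed

lemma pos_at_right_endpoint_if_deriv_pos_where_nonpos:
  fixes w :: "real \<Rightarrow> real"
  assumes "a < b" and cont: "continuous_on {a..b} w" and "w a = 0"
    and deriv: "\<And>p. p \<in> {a<..b} \<Longrightarrow> w p \<le> 0 \<Longrightarrow>
       \<exists>D>0. (w has_real_derivative D) (at p within {a..b})"
  shows "w b > 0"
proof (rule ccontr)
  assume "\<not> w b > 0"
  obtain p0 where p0: "p0 \<in> {a..b}" "\<forall>y\<in>{a..b}. w p0 \<le> w y"
    using continuous_attains_inf[OF compact_Icc _ cont] \<open>a < b\<close> by auto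
  obtain p where p: "p \<in> {a<..b}" "\<forall>y\<in>{a..b}. w p \<le> w y"
  proof (cases "p0 = a")
    case True
    then have "\<forall>y\<in>{a..b}. w b \<le> w y" using p0 \<open>w a = 0\<close> \<open>\<not> w b > 0\<close> by force
    then show ?thesis using that \<open>a < b\<close> by auto
  next
    case False
    then show ?thesis using that[of p0] p0 by auto
  qed
  have "w p \<le> 0" using p(2)[rule_format, of b] \<open>\<not> w b > 0\<close> \<open>a < b\<close> by auto
  then obtain D where "D > 0" "(w has_real_derivative D) (at p within {a..b})"
    using deriv p by blast
  then obtain d where "d > 0" and left: "\<forall>h>0. p - h \<in> {a..b} \<longrightarrow> h < d \<longrightarrow> w (p - h) < w p"
    using has_real_derivative_pos_inc_left by blast
  define h where "h = min d (p - a) / 2"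
  have "h > 0" "h < d" "h < p - a" using \<open>d > 0\<close> p by (auto simp: h_def)
  then have "p - h \<in> {a..b}" using p by auto
  with \<open>h > 0\<close> \<open>h < d\<close> show False using left p(2) by force
qed

lemma pos_at_left_endpoint_if_deriv_neg_where_nonpos:
  fixes w :: "real \<Rightarrow> real"
  assumes "a < b" and cont: "continuous_on {a..b} w" and "w b = 0"
    and deriv: "\<And>p. p \<in> {a..<b} \<Longrightarrow> w p \<le> 0 \<Longrightarrow>
       \<exists>D<0. (w has_real_derivative D) (at p within {a..b})"
  shows "w a > 0"
proof (rule ccontr)
  assume "\<not> w a > 0"
  obtain p0 where p0: "p0 \<in> {a..b}" "\<forall>y\<in>{a..b}. w p0 \<le> w y"
    using continuous_attains_inf[OF compact_Icc _ cont] \<open>a < b\<close> by auto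
  obtain p where p: "p \<in> {a..<b}" "\<forall>y\<in>{a..b}. w p \<le> w y"
  proof (cases "p0 = b")
    case True
    then have "\<forall>y\<in>{a..b}. w a \<le> w y" using p0 \<open>w b = 0\<close> \<open>\<not> w a > 0\<close> by force
    then show ?thesis using that \<open>a < b\<close> by auto
  next
    case False
    then show ?thesis using that[of p0] p0 by auto
  qed
  have "w p \<le> 0" using p(2)[rule_format, of a] \<open>\<not> w a > 0\<close> \<open>a < b\<close> by auto
  then obtain D where "D < 0" "(w has_real_derivative D) (at p within {a..b})"
    using deriv p by blast
  then obtain d where "d > 0" and right: "\<forall>h>0. p + h \<in> {a..b} \<longrightarrow> h < d \<longrightarrow> w (p + h) < w p"
    using has_real_derivative_neg_dec_right by blast
  define h where "h = min d (b - p) / 2"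
  have "h > 0" "h < d" "h < b - p" using \<open>d > 0\<close> p by (auto simp: h_def)
  then have "p + h \<in> {a..b}" using p by auto
  with \<open>h > 0\<close> \<open>h < d\<close> show False using right p(2) by force
qed

lemma integral_inverse_pos:
  fixes c :: "real \<Rightarrow> real"
  assumes "p < q" and cont: "continuous_on {p..q} c" and pos: "\<forall>x\<in>{p..q}. c x > 0"
  shows "integral {p..q} (\<lambda>x. 1 / c x) > 0"
proof -
  obtain x0 where "x0 \<in> {p..q}" and max: "\<forall>y\<in>{p..q}. c y \<le> c x0"
    using continuous_attains_sup[OF compact_Icc _ cont] \<open>p < q\<close> by auto
  have "integral {p..q} (\<lambda>x. 1 / c x0) \<le> integral {p..q} (\<lambda>x. 1 / c x)"
  proof (rule integral_le)
    show "(\<lambda>x. 1 / c x) integrable_on {p..q}"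
      using cont pos by (intro integrable_continuous_interval continuous_intros) auto
    show "1 / c x0 \<le> 1 / c x" if "x \<in> {p..q}" for x
      using max pos that by (simp add: frac_le)
  qed auto
  moreover have "integral {p..q} (\<lambda>x. 1 / c x0) > 0"
    using \<open>p < q\<close> pos \<open>x0 \<in> {p..q}\<close> by simp
  ultimately show ?thesis by linarith
qed

lemma Cc_pos:
  assumes "continuous_on {0..1} c" "\<forall>x\<in>{0..1}. c x > 0"
  shows "Cc c > 0"
  using integral_inverse_pos[of 0 1 c] assms unfolding Cc_def by simp

lemma Xc_0: "Xc c 0 = 0"
  by (simp add: Xc_def)

lemma Xc_1:
  assumes "continuous_on {0..1} c" "\<forall>x\<in>{0..1}. c x > 0"
  shows "Xc c 1 = 1"
  using integral_inverse_pos[of 0 1 c] assms unfolding Xc_def Cc_def by simp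

lemma Xc_strict_mono:
  assumes cont: "continuous_on {0..1} c" and pos: "\<forall>x\<in>{0..1}. c x > 0"
  shows "strict_mono_on {0..1} (Xc c)"
proof (rule strict_mono_onI)
  fix x y :: real assume "x \<in> {0..1}" "y \<in> {0..1}" "x < y"
  have "\<forall>t\<in>{0..y}. c t \<noteq> 0" using pos \<open>y \<in> {0..1}\<close> by force
  then have "(\<lambda>t. 1 / c t) integrable_on {0..y}"
    using \<open>y \<in> {0..1}\<close>
    by (intro integrable_continuous_interval continuous_intros continuous_on_subset[OF cont]) auto
  then have "integral {0..y} (\<lambda>t. 1 / c t) =
      integral {0..x} (\<lambda>t. 1 / c t) + integral {x..y} (\<lambda>t. 1 / c t)"
    using \<open>x \<in> {0..1}\<close> \<open>x < y\<close>
    by (intro Henstock_Kurzweil_Integration.integral_combine[symmetric]) auto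
  moreover have "integral {x..y} (\<lambda>t. 1 / c t) > 0"
    using \<open>x \<in> {0..1}\<close> \<open>y \<in> {0..1}\<close> \<open>x < y\<close> pos
    by (intro integral_inverse_pos continuous_on_subset[OF cont]) auto
  ultimately show "Xc c x < Xc c y"
    using Cc_pos[OF cont pos] unfolding Xc_def by simp
qed

lemma Xc_in_left_open_unit:
  assumes "continuous_on {0..1} c" "\<forall>x\<in>{0..1}. c x > 0" and "x \<in> {0<..1}"
  shows "Xc c x \<in> {0<..1}"
  using strict_mono_onD[OF Xc_strict_mono[OF assms(1,2)], of 0 x]
    strict_mono_onD[OF Xc_strict_mono[OF assms(1,2)], of x 1]
  using assms Xc_0 Xc_1 by (cases "x = 1") auto

lemma Xc_in_right_open_unit:
  assumes "continuous_on {0..1} c" "\<forall>x\<in>{0..1}. c x > 0" and "x \<in> {0..<1}"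
  shows "Xc c x \<in> {0..<1}"
  using strict_mono_onD[OF Xc_strict_mono[OF assms(1,2)], of 0 x]
    strict_mono_onD[OF Xc_strict_mono[OF assms(1,2)], of x 1]
  using assms Xc_0 Xc_1 by (cases "x = 0") auto

lemma is_b0_less_pi:
  assumes "C > 0" and b0: "is_b0 C b0"
  shows "b0 < pi"
proof (rule ccontr)
  assume "\<not> b0 < pi"
  define g where "g b = C * b * cos b + sin b" for b
  \<comment> \<open>\<open>g (pi/2) = 1\<close> and \<open>g pi = -C pi\<close>, so \<open>g\<close> vanishes at some \<open>x \<in> [pi/2, pi)\<close>,
    where \<open>cos x \<noteq> 0\<close> and hence \<open>C x + tan x = g x / cos x = 0\<close> with \<open>x < b0\<close>.\<close>
  have "\<exists>x. pi/2 \<le> x \<and> x \<le> pi \<and> g x = 0"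
    by (rule IVT2') (use \<open>C > 0\<close> in \<open>auto simp: g_def intro!: continuous_intros\<close>)
  then obtain x where x: "pi/2 \<le> x" "x \<le> pi" "g x = 0" by blast
  have "cos x \<noteq> 0"
  proof
    assume "cos x = 0"
    then have "sin x \<noteq> 0" using sin_cos_squared_add[of x] by auto
    with \<open>cos x = 0\<close> \<open>g x = 0\<close> show False by (simp add: g_def)
  qed
  have "x \<noteq> pi" using x \<open>C > 0\<close> by (auto simp: g_def)
  have "C * x + tan x = g x / cos x"
    using \<open>cos x \<noteq> 0\<close> by (simp add: g_def tan_def field_simps)
  moreover have "0 < x" "x < b0" using x \<open>x \<noteq> pi\<close> \<open>\<not> b0 < pi\<close> pi_gt_zero by linarith+
  ultimately show False using b0 \<open>cos x \<noteq> 0\<close> \<open>g x = 0\<close> unfolding is_b0_def by auto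
qed

lemma stationary_dbc_u_pos:
  assumes sol: "stationary_sol c True \<alpha> u v" and "\<alpha> > 0"
    and c_cont: "continuous_on {0..1} c" and c_pos: "\<forall>x\<in>{0..1}. c x > 0"
    and u_gt: "\<forall>x\<in>{0..1}. u x > -1"
    and s: "s \<in> {0<..1}" and v_pos: "\<forall>x\<in>{0<..s}. v x > 0"
  shows "u s > 0"
proof -
  have "c s * u s > 0"
  proof (rule pos_at_right_endpoint_if_deriv_pos_where_nonpos[where w = "\<lambda>y. c y * u y"])
    show "continuous_on {0..s} (\<lambda>y. c y * u y)"
      using sol c_cont s unfolding stationary_sol_def
      by (auto intro!: continuous_intros intro: continuous_on_subset)
    show "c 0 * u 0 = 0" using sol unfolding stationary_sol_def bc_holds_def by simp
    fix p assume p: "p \<in> {0<..s}" "c p * u p \<le> 0"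
    then have "p \<in> {0..1}" using s by auto
    then have "c p > 0" "v p > 0" using c_pos v_pos p by auto
    moreover have "u p \<le> 0" using p(2) \<open>c p > 0\<close> by (simp add: mult_le_0_iff)
    moreover have "1 + u p + v p > 0" using u_gt \<open>p \<in> {0..1}\<close> \<open>v p > 0\<close> by force
    ultimately have "\<alpha> * v p / (1 + u p + v p) - u p > 0"
      using \<open>\<alpha> > 0\<close> by (smt (verit) divide_pos_pos mult_pos_pos)
    moreover have "((\<lambda>y. c y * u y) has_real_derivative \<alpha> * v p / (1 + u p + v p) - u p)
        (at p within {0..1})"
      using sol \<open>p \<in> {0..1}\<close> unfolding stationary_sol_def by blast
    then have "((\<lambda>y. c y * u y) has_real_derivative \<alpha> * v p / (1 + u p + v p) - u p)
        (at p within {0..s})"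
      by (rule has_field_derivative_subset) (use s in auto)
    ultimately show "\<exists>D>0. ((\<lambda>y. c y * u y) has_real_derivative D) (at p within {0..s})"
      by blast
  qed (use s in auto)
  moreover have "c s > 0" using c_pos s by auto
  ultimately show ?thesis by (simp add: zero_less_mult_iff)
qed

lemma stationary_dbc_v_pos:
  assumes sol: "stationary_sol c True \<alpha> u v" and "\<alpha> > 0"
    and c_cont: "continuous_on {0..1} c" and c_pos: "\<forall>x\<in>{0..1}. c x > 0"
    and v_gt: "\<forall>x\<in>{0..1}. v x > -1"
    and s: "s \<in> {0..<1}" and u_pos: "\<forall>x\<in>{s..<1}. u x > 0"
  shows "v s > 0"
proof -
  have "c s * v s > 0"
  proof (rule pos_at_left_endpoint_if_deriv_neg_where_nonpos[where w = "\<lambda>y. c y * v y"])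
    show "continuous_on {s..1} (\<lambda>y. c y * v y)"
      using sol c_cont s unfolding stationary_sol_def
      by (auto intro!: continuous_intros intro: continuous_on_subset)
    show "c 1 * v 1 = 0" using sol unfolding stationary_sol_def bc_holds_def by simp
    fix p assume p: "p \<in> {s..<1}" "c p * v p \<le> 0"
    then have "p \<in> {0..1}" using s by auto
    then have "c p > 0" "u p > 0" using c_pos u_pos p by auto
    moreover have "v p \<le> 0" using p(2) \<open>c p > 0\<close> by (simp add: mult_le_0_iff)
    moreover have "1 + u p + v p > 0" using v_gt \<open>p \<in> {0..1}\<close> \<open>u p > 0\<close> by force
    ultimately have "-(\<alpha> * u p / (1 + u p + v p) - v p) < 0"
      using \<open>\<alpha> > 0\<close> by (smt (verit) divide_pos_pos mult_pos_pos)
    moreover have "((\<lambda>y. c y * v y) has_real_derivative -(\<alpha> * u p / (1 + u p + v p) - v p))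
        (at p within {0..1})"
      using sol \<open>p \<in> {0..1}\<close> unfolding stationary_sol_def by blast
    then have "((\<lambda>y. c y * v y) has_real_derivative -(\<alpha> * u p / (1 + u p + v p) - v p))
        (at p within {s..1})"
      by (rule has_field_derivative_subset) (use s in auto)
    ultimately show "\<exists>D<0. ((\<lambda>y. c y * v y) has_real_derivative D) (at p within {s..1})"
      by blast
  qed (use s in auto)
  moreover have "c s > 0" using c_pos s by auto
  ultimately show ?thesis by (simp add: zero_less_mult_iff)
qed

lemma stationary_branch_dbc_eventually_pos:
  fixes U V :: "real \<Rightarrow> real \<Rightarrow> real" and k :: "real \<Rightarrow> real"
  assumes c_cont: "continuous_on {0..1} c" and c_pos: "\<forall>x\<in>{0..1}. c x > 0"
    and b0: "is_b0 (Cc c) b0" and "a \<ge> 0"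
    and stat: "\<And>\<alpha>. \<alpha> \<in> S \<Longrightarrow> stationary_sol c True \<alpha> (U \<alpha>) (V \<alpha>)"
    and zero: "\<forall>x\<in>{0..1}. U a x = 0" "\<forall>x\<in>{0..1}. V a x = 0"
    and k_pos: "\<forall>x\<in>{0..1}. k x > 0"
    and dU: "unif_has_deriv U (\<lambda>x. k x * sin (b0 * Xc c x)) a S"
    and dV: "unif_has_deriv V (\<lambda>x. k x * sin (b0 * (1 - Xc c x))) a S"
  shows "eventually (\<lambda>\<alpha>. \<alpha> \<in> S \<longrightarrow>
           (\<forall>x\<in>{0<..1}. U \<alpha> x > 0) \<and> (\<forall>x\<in>{0..<1}. V \<alpha> x > 0)) (at_right a)"
proof -
  have "0 < b0" "b0 < pi"
    using b0 is_b0_less_pi Cc_pos[OF c_cont c_pos] unfolding is_b0_def by auto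
  have sin_pos: "sin (b0 * t) > 0" if "t \<in> {0<..1}" for t
  proof (rule sin_gt_zero)
    show "0 < b0 * t" using that \<open>0 < b0\<close> by simp
    have "b0 * t \<le> b0" using that \<open>0 < b0\<close> by (simp add: mult_left_le)
    then show "b0 * t < pi" using \<open>b0 < pi\<close> by linarith
  qed
  have "eventually (\<lambda>\<alpha>. \<alpha> \<in> S \<longrightarrow> (\<forall>x\<in>{1/2..1}. U \<alpha> x > 0)) (at_right a)"
    using k_pos sin_pos Xc_in_left_open_unit[OF c_cont c_pos]
    by (intro unif_has_deriv_imp_eventually_pos[OF dU zero(1)]) auto
  moreover have "eventually (\<lambda>\<alpha>. \<alpha> \<in> S \<longrightarrow> (\<forall>x\<in>{0..1/2}. V \<alpha> x > 0)) (at_right a)"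
    using k_pos sin_pos Xc_in_right_open_unit[OF c_cont c_pos]
    by (intro unif_has_deriv_imp_eventually_pos[OF dV zero(2)]) auto
  moreover have "eventually (\<lambda>\<alpha>. \<alpha> \<in> S \<longrightarrow> (\<forall>x\<in>{0..1}. \<bar>U \<alpha> x\<bar> < 1)) (at_right a)"
    and "eventually (\<lambda>\<alpha>. \<alpha> \<in> S \<longrightarrow> (\<forall>x\<in>{0..1}. \<bar>V \<alpha> x\<bar> < 1)) (at_right a)"
    using unif_has_deriv_imp_eventually_small[OF dU zero(1), of 1]
      unif_has_deriv_imp_eventually_small[OF dV zero(2), of 1]
    by (auto intro: filter_leD[OF at_le, rotated])
  moreover have "eventually (\<lambda>\<alpha>. a < \<alpha>) (at_right a)"
    by (rule eventually_at_right_less)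
  ultimately show ?thesis
  proof eventually_elim
    case (elim \<alpha>)
    show ?case
    proof (intro impI conjI ballI)
      assume "\<alpha> \<in> S"
      note sol = stat[OF this] and pos = c_cont c_pos
      have "\<alpha> > 0" using elim \<open>a \<ge> 0\<close> by linarith
      show "U \<alpha> x > 0" if "x \<in> {0<..1}" for x
      proof (cases "x \<ge> 1/2")
        case False
        then show ?thesis
          using stationary_dbc_u_pos[OF sol \<open>\<alpha> > 0\<close> pos, of x] elim \<open>\<alpha> \<in> S\<close> that by force
      qed (use elim \<open>\<alpha> \<in> S\<close> that in auto)
      show "V \<alpha> x > 0" if "x \<in> {0..<1}" for x
      proof (cases "x \<le> 1/2")
        case False
        then show ?thesis
          using stationary_dbc_v_pos[OF sol \<open>\<alpha> > 0\<close> pos, of x] elim \<open>\<alpha> \<in> S\<close> that by force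
      qed (use elim \<open>\<alpha> \<in> S\<close> that in auto)
    qed
  qed
qed

theorem lemma5p2:
  fixes c :: "real \<Rightarrow> real" and cl cu b0 \<alpha>1 \<kappa>1 \<kappa>2 :: real and dbc :: bool
    and U V :: "real \<Rightarrow> real \<Rightarrow> real"
  assumes c_cont: "continuous_on {0..1} c"
    and cl_pos: "0 < cl"
    and c_bounds: "\<And>x. x \<in> {0..1} \<Longrightarrow> cl \<le> c x \<and> c x \<le> cu"
    and b0: "is_b0 (Cc c) b0"
    and a1: "alpha0 dbc b0 < \<alpha>1"
    and k_pos: "0 < \<kappa>1" "0 < \<kappa>2"
    and stat: "\<And>\<alpha>. \<alpha> \<in> {alpha0 dbc b0..<\<alpha>1} \<Longrightarrow> stationary_sol c dbc \<alpha> (U \<alpha>) (V \<alpha>)"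
    and smooth: "\<And>a. a \<in> {alpha0 dbc b0..<\<alpha>1} \<Longrightarrow>
       (\<exists>dU dV. unif_has_deriv U dU a {alpha0 dbc b0..<\<alpha>1} \<and>
                unif_has_deriv V dV a {alpha0 dbc b0..<\<alpha>1})"
    and zero: "\<And>x. x \<in> {0..1} \<Longrightarrow> U (alpha0 dbc b0) x = 0 \<and> V (alpha0 dbc b0) x = 0"
    and deriv0: "unif_has_deriv U
         (\<lambda>x. \<kappa>1 * Cc c / (\<kappa>2 * c x) * fst (profile dbc b0 (Xc c x)))
         (alpha0 dbc b0) {alpha0 dbc b0..<\<alpha>1}"
      "unif_has_deriv V
         (\<lambda>x. \<kappa>1 * Cc c / (\<kappa>2 * c x) * snd (profile dbc b0 (Xc c x)))
         (alpha0 dbc b0) {alpha0 dbc b0..<\<alpha>1}"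
  shows "\<exists>\<delta>>0. \<forall>\<alpha>. alpha0 dbc b0 < \<alpha> \<and> \<alpha> < alpha0 dbc b0 + \<delta> \<and> \<alpha> < \<alpha>1 \<longrightarrow>
           (if dbc then (\<forall>x\<in>{0<..1}. U \<alpha> x > 0) \<and> (\<forall>x\<in>{0..<1}. V \<alpha> x > 0)
            else (\<forall>x\<in>{0..1}. U \<alpha> x > 0 \<and> V \<alpha> x > 0))"
proof -
  define a S where "a = alpha0 dbc b0" and "S = {a..<\<alpha>1}"
  have c_pos: "\<forall>x\<in>{0..1}. c x > 0" using c_bounds cl_pos by force
  have coeff_pos: "\<forall>x\<in>{0..1}. \<kappa>1 * Cc c / (\<kappa>2 * c x) > 0"
    using k_pos c_pos Cc_pos[OF c_cont c_pos] by auto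
  have zero_a: "\<forall>x\<in>{0..1}. U a x = 0" "\<forall>x\<in>{0..1}. V a x = 0" using zero a_def by auto
  have "eventually (\<lambda>\<alpha>. \<alpha> \<in> S \<longrightarrow>
          (if dbc then (\<forall>x\<in>{0<..1}. U \<alpha> x > 0) \<and> (\<forall>x\<in>{0..<1}. V \<alpha> x > 0)
           else (\<forall>x\<in>{0..1}. U \<alpha> x > 0 \<and> V \<alpha> x > 0))) (at_right a)"
    (is "eventually (\<lambda>\<alpha>. \<alpha> \<in> S \<longrightarrow> ?P \<alpha>) _")
  proof (cases dbc)
    case True
    have "eventually (\<lambda>\<alpha>. \<alpha> \<in> S \<longrightarrow>
            (\<forall>x\<in>{0<..1}. U \<alpha> x > 0) \<and> (\<forall>x\<in>{0..<1}. V \<alpha> x > 0)) (at_right a)"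
      using deriv0 stat True
      by (intro stationary_branch_dbc_eventually_pos[where k = "\<lambda>x. \<kappa>1 * Cc c / (\<kappa>2 * c x)"
            and U = U and V = V, OF c_cont c_pos b0 _ _ zero_a coeff_pos])
        (auto simp: a_def S_def alpha0_def profile_def)
    with True show ?thesis by simp
  next
    case False
    have dU: "unif_has_deriv U (\<lambda>x. \<kappa>1 * Cc c / (\<kappa>2 * c x)) a S"
      and dV: "unif_has_deriv V (\<lambda>x. \<kappa>1 * Cc c / (\<kappa>2 * c x)) a S"
      using deriv0 False by (simp_all add: a_def S_def profile_def)
    from unif_has_deriv_imp_eventually_pos[OF dU zero_a(1) compact_Icc order_refl coeff_pos]
      unif_has_deriv_imp_eventually_pos[OF dV zero_a(2) compact_Icc order_refl coeff_pos]
    show ?thesis using False by eventually_elim auto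
  qed
  then obtain b where "b > a" and "\<forall>\<alpha>>a. \<alpha> < b \<longrightarrow> \<alpha> \<in> S \<longrightarrow> ?P \<alpha>"
    unfolding eventually_at_right_field by blast
  then show ?thesis
    by (intro exI[of _ "b - a"]) (auto simp: S_def a_def)
qed

end
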